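(* Let $Z$ be a random variable with values in a Polish space $\mathcal{Z}$ and $\mathbb{F}=(\mathcal{F}_t)_{t\ge0}$ a filtration with $\mathcal{F}_t\subset\sigma(Z)$ for all $t\ge0$. If $\tau$ is an $(\mathbb{F}_+,Z)$-randomized stopping time, then there exists a sequence of $(\mathbb{F},Z)$-randomized stopping times $\tau_n$ such that $(Z,\tau_n)\to(Z,\tau)$ in law in $\mathcal{Z}\times[0,\infty]$.
   Context: A random time is a $[0,\infty]$-valued random variable $\tau$; $\mathcal{F}^\tau_t=\sigma(\{\tau\le s\}:s\le t)$. For a filtration $\mathbb{G}$ with $\mathcal{G}_t\subset\sigma(Z)$, $\tau$ is a $(\mathbb{G},Z)$-randomized stopping time if $\mathcal{F}^\tau_t$ is conditionally independent of $Z$ given $\mathcal{G}_t$ for every $t\ge0$, equivalently $\mathbb{P}(\tau\le t\mid Z)=\mathbb{P}(\tau\le t\mid\mathcal{G}_t)$ a.s. for every $t$. $\mathbb{F}_+=(\mathcal{F}_{t+})$ with $\mathcal{F}_{t+}=\bigcap_{s>t}\mathcal{F}_s$. *)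

theory Defs
  imports "HOL-Probability.Probability"
begin

definition sigma_rv :: "'a measure \<Rightarrow> ('a \<Rightarrow> 'z::topological_space) \<Rightarrow> 'a measure" where
  "sigma_rv M Z = vimage_algebra (space M) Z borel"

definition filtration_on :: "'a measure \<Rightarrow> (real \<Rightarrow> 'a measure) \<Rightarrow> bool" where
  "filtration_on M F \<longleftrightarrow>
     (\<forall>t\<ge>0. subalgebra M (F t)) \<and>
     (\<forall>s t. 0 \<le> s \<longrightarrow> s \<le> t \<longrightarrow> sets (F s) \<subseteq> sets (F t))"

text \<open>The right-continuous filtration F_+ with F_{t+} = intersection of F_s over s > t.
  (The intersection of sigma-algebras is a sigma-algebra, so sigma does not enlarge it.)\<close>
definition right_filtration :: "'a measure \<Rightarrow> (real \<Rightarrow> 'a measure) \<Rightarrow> real \<Rightarrow> 'a measure" where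
  "right_filtration M F t = sigma (space M) (\<Inter>s\<in>{t<..}. sets (F s))"

definition randomized_stopping_time ::
    "'a measure \<Rightarrow> (real \<Rightarrow> 'a measure) \<Rightarrow> ('a \<Rightarrow> 'z::topological_space) \<Rightarrow> ('a \<Rightarrow> ennreal) \<Rightarrow> bool" where
  "randomized_stopping_time M G Z \<tau> \<longleftrightarrow>
     \<tau> \<in> borel_measurable M \<and>
     (\<forall>t::real. 0 \<le> t \<longrightarrow>
        (AE \<omega> in M. real_cond_exp M (sigma_rv M Z) (indicator {\<omega>\<in>space M. \<tau> \<omega> \<le> ennreal t}) \<omega>
                   = real_cond_exp M (G t) (indicator {\<omega>\<in>space M. \<tau> \<omega> \<le> ennreal t}) \<omega>))"

definition converges_in_law :: "'a measure \<Rightarrow> (nat \<Rightarrow> 'a \<Rightarrow> 'b::topological_space) \<Rightarrow> ('a \<Rightarrow> 'b) \<Rightarrow> bool" where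
  "converges_in_law M Xs X \<longleftrightarrow>
     (\<forall>f :: 'b \<Rightarrow> real. continuous_on UNIV f \<longrightarrow> bounded (range f) \<longrightarrow>
        (\<lambda>n. \<integral>\<omega>. f (Xs n \<omega>) \<partial>M) \<longlonglongrightarrow> (\<integral>\<omega>. f (X \<omega>) \<partial>M))"

end

theory Submission
  imports Defs
begin

text \<open>Delay \<tau> by a deterministic \<epsilon> > 0. Then {\<tau> + \<epsilon> \<le> t} = {\<tau> \<le> t - \<epsilon>}, and
  P(\<tau> \<le> t - \<epsilon> | Z) = P(\<tau> \<le> t - \<epsilon> | F_{(t-\<epsilon>)+}) is F_t-measurable because t - \<epsilon> < t.
  As F_{(t-\<epsilon>)+} \<subseteq> F_t \<subseteq> \<sigma>(Z), conditioning on the intermediate F_t does not change it, so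
  \<tau> + \<epsilon> is an (F, Z)-randomized stopping time. Letting \<epsilon> \<rightarrow> 0 gives pointwise convergence of
  (Z, \<tau> + \<epsilon>) to (Z, \<tau>), hence convergence in law by dominated convergence.\<close>

lemma subalgebra_trans: "subalgebra M G \<Longrightarrow> subalgebra G F \<Longrightarrow> subalgebra M F"
  unfolding subalgebra_def by auto

lemma sigma_finite_subalgebra_of_finite_measure:
  assumes "finite_measure M" and "subalgebra M F"
  shows "sigma_finite_subalgebra M F"
proof -
  interpret finite_measure M by (rule assms(1))
  show ?thesis
    by (rule finite_measure_subalgebra_is_sigma_finite, unfold_locales) (rule assms(2))
qed

lemma subalgebra_sigma_rv:
  assumes "Z \<in> borel_measurable M"
  shows "subalgebra M (sigma_rv M Z)"
proof -
  have "sets (sigma_rv M Z) = {Z -` A \<inter> space M |A. A \<in> sets borel}"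
    unfolding sigma_rv_def by (rule sets_vimage_algebra2) simp
  also have "\<dots> \<subseteq> sets M" using measurable_sets[OF assms] by auto
  finally show ?thesis unfolding subalgebra_def sigma_rv_def by simp
qed

lemma subalgebra_right_filtration:
  assumes sub: "subalgebra M (F t)" and "s < t"
  shows "subalgebra (F t) (right_filtration M F s)"
proof -
  let ?X = "\<Inter>s'\<in>{s<..}. sets (F s')"
  have X_sub: "?X \<subseteq> sets (F t)" using \<open>s < t\<close> by auto
  then have "?X \<subseteq> Pow (space M)"
    using sub sets.sets_into_space unfolding subalgebra_def by blast
  then have "sets (right_filtration M F s) = sigma_sets (space M) ?X"
    and "space (right_filtration M F s) = space M"
    unfolding right_filtration_def by (auto intro: sets_measure_of space_measure_of)
  then show ?thesis
    using sets.sigma_sets_subset[OF X_sub] sub unfolding subalgebra_def by simp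
qed

lemma (in sigma_finite_subalgebra) real_cond_exp_intermediate_eq:
  assumes "subalgebra M S" and "subalgebra S H" and "subalgebra H F"
    and f: "integrable M f"
    and eq: "AE x in M. real_cond_exp M S f x = real_cond_exp M F f x"
  shows "AE x in M. real_cond_exp M S f x = real_cond_exp M H f x"
proof -
  have MH: "subalgebra M H" using assms(1,2) by (rule subalgebra_trans)
  interpret H: sigma_finite_subalgebra M H
    by (rule nested_subalg_is_sigma_finite[OF MH assms(3)])
  have "AE x in M. real_cond_exp M H f x = real_cond_exp M H (real_cond_exp M S f) x"
    using H.real_cond_exp_nested_subalg[OF assms(1,2) f] by auto
  moreover have "AE x in M. real_cond_exp M H (real_cond_exp M S f) x
                          = real_cond_exp M H (real_cond_exp M F f) x"
    by (rule H.real_cond_exp_cong[OF eq]) auto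
  moreover have "AE x in M. real_cond_exp M H (real_cond_exp M F f) x = real_cond_exp M F f x"
    by (rule H.real_cond_exp_F_meas[OF real_cond_exp_int(1)[OF f]
          measurable_from_subalg[OF assms(3) borel_measurable_cond_exp]])
  ultimately show ?thesis using eq by auto
qed

lemma ennreal_add_le_ennreal_iff:
  assumes "0 < e"
  shows "x + ennreal e \<le> ennreal t \<longleftrightarrow> e \<le> t \<and> x \<le> ennreal (t - e)"
proof (cases x)
  case (real r)
  then show ?thesis
    using assms by (cases "0 \<le> t") (auto simp: ennreal_plus[symmetric] ennreal_le_iff2 simp del: ennreal_plus)
qed (simp add: top_unique)

lemma randomized_stopping_time_delay:
  fixes \<tau> :: "'a \<Rightarrow> ennreal"
  assumes "prob_space M" and "Z \<in> borel_measurable M"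
    and sub: "\<And>t. 0 \<le> t \<Longrightarrow> subalgebra M (F t)"
    and F_Z: "\<And>t. 0 \<le> t \<Longrightarrow> sets (F t) \<subseteq> sets (sigma_rv M Z)"
    and \<tau>: "randomized_stopping_time M (right_filtration M F) Z \<tau>"
    and "0 < e"
  shows "randomized_stopping_time M F Z (\<lambda>\<omega>. \<tau> \<omega> + ennreal e)"
  unfolding randomized_stopping_time_def
proof (intro conjI allI impI)
  interpret prob_space M by (rule assms(1))
  have \<tau>_meas: "\<tau> \<in> borel_measurable M"
    using \<tau> unfolding randomized_stopping_time_def by simp
  then show "(\<lambda>\<omega>. \<tau> \<omega> + ennreal e) \<in> borel_measurable M" by simp
  fix t :: real
  assume "0 \<le> t"
  let ?A = "{\<omega> \<in> space M. \<tau> \<omega> + ennreal e \<le> ennreal t}"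
  have M_Z: "subalgebra M (sigma_rv M Z)" by (rule subalgebra_sigma_rv[OF assms(2)])
  have M_Ft: "subalgebra M (F t)" using sub \<open>0 \<le> t\<close> .
  show "AE \<omega> in M. real_cond_exp M (sigma_rv M Z) (indicator ?A) \<omega>
                   = real_cond_exp M (F t) (indicator ?A) \<omega>"
  proof (cases "e \<le> t")
    case False
    interpret Z: sigma_finite_subalgebra M "sigma_rv M Z"
      by (rule sigma_finite_subalgebra_of_finite_measure[OF finite_measure_axioms M_Z])
    interpret Ft: sigma_finite_subalgebra M "F t"
      by (rule sigma_finite_subalgebra_of_finite_measure[OF finite_measure_axioms M_Ft])
    have A_empty: "indicator ?A = (\<lambda>_. 0 :: real)"
      using False \<open>0 < e\<close> by (auto simp: ennreal_add_le_ennreal_iff)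
    have "AE \<omega> in M. real_cond_exp M (sigma_rv M Z) (\<lambda>_. 0) \<omega> = 0"
      by (rule Z.real_cond_exp_F_meas) auto
    moreover have "AE \<omega> in M. real_cond_exp M (F t) (\<lambda>_. 0) \<omega> = 0"
      by (rule Ft.real_cond_exp_F_meas) auto
    ultimately show ?thesis unfolding A_empty by eventually_elim simp
  next
    case True
    define s where "s = t - e"
    have "0 \<le> s" "s < t" using True \<open>0 < e\<close> unfolding s_def by auto
    have A_eq: "?A = {\<omega> \<in> space M. \<tau> \<omega> \<le> ennreal s}"
      using True \<open>0 < e\<close> by (auto simp: ennreal_add_le_ennreal_iff s_def)
    have Ft_R: "subalgebra (F t) (right_filtration M F s)"
      using subalgebra_right_filtration[where F = F, OF M_Ft \<open>s < t\<close>] .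
    interpret R: sigma_finite_subalgebra M "right_filtration M F s"
      by (rule sigma_finite_subalgebra_of_finite_measure[OF finite_measure_axioms
            subalgebra_trans[OF M_Ft Ft_R]])
    have Z_Ft: "subalgebra (sigma_rv M Z) (F t)"
      using F_Z[OF \<open>0 \<le> t\<close>] M_Ft M_Z unfolding subalgebra_def by auto
    have "integrable M (indicator {\<omega> \<in> space M. \<tau> \<omega> \<le> ennreal s} :: 'a \<Rightarrow> real)"
      using \<tau>_meas by (intro integrable_real_indicator) (auto simp: less_top[symmetric])
    from R.real_cond_exp_intermediate_eq[OF M_Z Z_Ft Ft_R this]
    show ?thesis
      using \<tau> \<open>0 \<le> s\<close> unfolding randomized_stopping_time_def A_eq by blast
  qed
qed

lemma (in finite_measure) AE_tendsto_imp_converges_in_law: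
  fixes Xs :: "nat \<Rightarrow> 'a \<Rightarrow> 'b::topological_space"
  assumes "\<And>n. Xs n \<in> borel_measurable M" and "X \<in> borel_measurable M"
    and lim: "AE \<omega> in M. (\<lambda>n. Xs n \<omega>) \<longlonglongrightarrow> X \<omega>"
  shows "converges_in_law M Xs X"
  unfolding converges_in_law_def
proof (intro allI impI)
  fix f :: "'b \<Rightarrow> real"
  assume f_cont: "continuous_on UNIV f" and "bounded (range f)"
  then obtain B where B: "\<And>x. norm (f x) \<le> B" unfolding bounded_iff by auto
  show "(\<lambda>n. \<integral>\<omega>. f (Xs n \<omega>) \<partial>M) \<longlonglongrightarrow> (\<integral>\<omega>. f (X \<omega>) \<partial>M)"
  proof (rule integral_dominated_convergence[where w = "\<lambda>_. B"])
    show "(\<lambda>\<omega>. f (X \<omega>)) \<in> borel_measurable M"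
      by (rule borel_measurable_continuous_on[OF f_cont assms(2)])
    show "(\<lambda>\<omega>. f (Xs n \<omega>)) \<in> borel_measurable M" for n
      by (rule borel_measurable_continuous_on[OF f_cont assms(1)])
    show "integrable M (\<lambda>_. B)" by simp
    show "AE \<omega> in M. norm (f (Xs n \<omega>)) \<le> B" for n
      using B by simp
    show "AE \<omega> in M. (\<lambda>n. f (Xs n \<omega>)) \<longlonglongrightarrow> f (X \<omega>)"
      using lim by eventually_elim (rule continuous_on_tendsto_compose[OF f_cont]; simp)
  qed
qed

theorem lemma4p6:
  fixes M :: "'a measure" and Z :: "'a \<Rightarrow> 'z::polish_space"
    and F :: "real \<Rightarrow> 'a measure" and \<tau> :: "'a \<Rightarrow> ennreal"
  assumes "prob_space M"
    and "Z \<in> borel_measurable M"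
    and "filtration_on M F"
    and "\<And>t. 0 \<le> t \<Longrightarrow> sets (F t) \<subseteq> sets (sigma_rv M Z)"
    and "randomized_stopping_time M (right_filtration M F) Z \<tau>"
  shows "\<exists>\<tau>s :: nat \<Rightarrow> 'a \<Rightarrow> ennreal.
           (\<forall>n. randomized_stopping_time M F Z (\<tau>s n)) \<and>
           converges_in_law M (\<lambda>n \<omega>. (Z \<omega>, \<tau>s n \<omega>)) (\<lambda>\<omega>. (Z \<omega>, \<tau> \<omega>))"
proof -
  interpret prob_space M by (rule assms(1))
  define \<tau>s where "\<tau>s n \<omega> = \<tau> \<omega> + ennreal (1 / Suc n)" for n \<omega>
  have "randomized_stopping_time M F Z (\<tau>s n)" for n
    unfolding \<tau>s_def using assms(3)
    by (intro randomized_stopping_time_delay[OF assms(1,2) _ assms(4,5)])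
      (auto simp: filtration_on_def)
  moreover have "converges_in_law M (\<lambda>n \<omega>. (Z \<omega>, \<tau>s n \<omega>)) (\<lambda>\<omega>. (Z \<omega>, \<tau> \<omega>))"
  proof (rule AE_tendsto_imp_converges_in_law)
    have "\<tau> \<in> borel_measurable M"
      using assms(5) unfolding randomized_stopping_time_def by simp
    then show "(\<lambda>\<omega>. (Z \<omega>, \<tau>s n \<omega>)) \<in> borel_measurable M"
      and "(\<lambda>\<omega>. (Z \<omega>, \<tau> \<omega>)) \<in> borel_measurable M" for n
      using assms(2) unfolding \<tau>s_def by measurable
    have "(\<lambda>n. ennreal (1 / Suc n)) \<longlonglongrightarrow> 0"
      using tendsto_ennrealI[OF LIMSEQ_inverse_real_of_nat] by (simp add: inverse_eq_divide)
    then have "(\<lambda>n. \<tau>s n \<omega>) \<longlonglongrightarrow> \<tau> \<omega> + 0" for \<omega>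
      unfolding \<tau>s_def by (intro tendsto_add tendsto_const)
    then show "AE \<omega> in M. (\<lambda>n. (Z \<omega>, \<tau>s n \<omega>)) \<longlonglongrightarrow> (Z \<omega>, \<tau> \<omega>)"
      by (intro AE_I2 tendsto_Pair tendsto_const) simp
  qed
  ultimately show ?thesis by blast
qed

end
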